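(* There is an absolute constant $A > 0$ such that the following holds. Let $E \subset B(1) \subset \mathbb{R}^{2}$, $\varepsilon \in (0,1)$ and $\beta \in (0,\tfrac{1}{2})$. Then there exists a $2\beta$-Lipschitz graph $\Gamma \subset \mathbb{R}^{2}$ over the $x$-axis such that \[ \mathcal{H}^{1}\big(\{x \in E : \Theta^*_{E,\beta}(x) \leq \varepsilon\} \setminus \Gamma\big) \leq A\,\varepsilon/\beta. \]
   Context: $B(1)$ is the closed unit ball centred at the origin. A $\beta$-Lipschitz graph over the $x$-axis is a set $\{(t,f(t)) : t \in A\}$ with $A\subset\mathbb{R}$ and $f$ $\beta$-Lipschitz. For $\beta > 0$, $\mathcal{C}_\beta = \{(x,y) : |y| \geq \beta |x|\}$, $\mathcal{C}_\beta(x,r) = (x + \mathcal{C}_\beta) \cap B(x,r)$, and $\Theta^*_{E,\beta}(x) = \sup_{r>0} \mathcal{H}^1(\mathcal{C}_\beta(x,r) \cap E)/r$. *)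

theory Defs
  imports "HOL-Analysis.Analysis"
begin

type_synonym point = "real \<times> real"

text \<open>delta-approximating one-dimensional Hausdorff content (outer), via countable covers
  by sets of diameter at most delta (unnormalised diameter convention, so H1 = length).\<close>
definition hausdorff_pre1 :: "real \<Rightarrow> point set \<Rightarrow> ennreal" where
  "hausdorff_pre1 \<delta> E =
     (INF U \<in> {U :: nat \<Rightarrow> point set. E \<subseteq> (\<Union>i. U i) \<and>
                  (\<forall>i. bounded (U i) \<and> diameter (U i) \<le> \<delta>)}.
        (\<Sum>i. ennreal (diameter (U i))))"

definition H1 :: "point set \<Rightarrow> ennreal" where
  "H1 E = (SUP \<delta> \<in> {0<..}. hausdorff_pre1 \<delta> E)"

definition cone :: "real \<Rightarrow> point set" where
  "cone \<beta> = {p. \<bar>snd p\<bar> \<ge> \<beta> * \<bar>fst p\<bar>}"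

definition cone_ball :: "real \<Rightarrow> point \<Rightarrow> real \<Rightarrow> point set" where
  "cone_ball \<beta> x r = ((\<lambda>p. x + p) ` cone \<beta>) \<inter> cball x r"

definition cone_density :: "point set \<Rightarrow> real \<Rightarrow> point \<Rightarrow> ennreal" where
  "cone_density E \<beta> x = (SUP r \<in> {0<..}. H1 (cone_ball \<beta> x r \<inter> E) / ennreal r)"

definition lipschitz_graph :: "real \<Rightarrow> point set \<Rightarrow> bool" where
  "lipschitz_graph L \<Gamma> \<longleftrightarrow>
     (\<exists>A f. L-lipschitz_on A f \<and> \<Gamma> = {(t, f t) | t. t \<in> A})"

end

theory Submission
  imports Defs
begin

(* Let G be the set of points of E with conical density at most \<epsilon>. The points of G that see no
   other point of G inside their (2\<beta>)-cone form a 2\<beta>-Lipschitz graph. For each remaining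
   point x let h(x) be the supremum of the distances to such cone partners y in G. A partner at
   distance more than h(x)/2 rises by at least \<beta>h(x)/2 over x, so the box
   |z1 - x1| < h/8, |z2 - x2| < 10h is covered by C_\<beta>(x, 11h) and C_\<beta>(y, 12h) and has
   measure at most 23\<epsilon>h. The boxes are chosen by the Vitali covering lemma; two chosen centres
   with close first coordinates would be cone partners farther apart than their scales allow,
   so the chosen centres have disjoint x-intervals of length h/40 in [-2, 2]. Summing gives
   the bound 3680\<epsilon>, which is even better than the required A\<epsilon>/\<beta>. *)

lemma hausdorff_pre1_mono: "S \<subseteq> T \<Longrightarrow> hausdorff_pre1 \<delta> S \<le> hausdorff_pre1 \<delta> T"
  unfolding hausdorff_pre1_def by (rule INF_superset_mono) auto

lemma H1_mono: "S \<subseteq> T \<Longrightarrow> H1 S \<le> H1 T"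
  unfolding H1_def by (rule SUP_mono) (use hausdorff_pre1_mono in blast)

lemma hausdorff_pre1_le_H1: "0 < \<delta> \<Longrightarrow> hausdorff_pre1 \<delta> S \<le> H1 S"
  unfolding H1_def by (rule SUP_upper) auto

lemma hausdorff_pre1_UN_le:
  assumes "\<And>n. A n \<subseteq> (\<Union>i. B n i)" "\<And>n i. bounded (B n i) \<and> diameter (B n i) \<le> \<delta>"
  shows "hausdorff_pre1 \<delta> (\<Union>n. A n) \<le> (\<Sum>n. \<Sum>i. ennreal (diameter (B n i)))"
proof -
  define C where "C = case_prod B \<circ> prod_decode"
  have "x \<in> (\<Union>k. C k)" if x: "x \<in> A n" for x n
  proof -
    obtain i where "x \<in> B n i" using assms(1)[of n] x by blast
    then have "x \<in> C (prod_encode (n, i))" by (simp add: C_def)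
    then show ?thesis by blast
  qed
  then have "hausdorff_pre1 \<delta> (\<Union>n. A n) \<le> (\<Sum>k. ennreal (diameter (C k)))"
    unfolding hausdorff_pre1_def using assms(2) by (intro INF_lower) (auto simp: C_def split_def)
  also have "\<dots> = (\<Sum>n. \<Sum>i. ennreal (diameter (B n i)))"
    unfolding C_def comp_def by (intro suminf_ennreal_2dimen) (simp add: split_def)
  finally show ?thesis .
qed

lemma hausdorff_pre1_countable_subadditive:
  "hausdorff_pre1 \<delta> (\<Union>n. A n) \<le> (\<Sum>n. hausdorff_pre1 \<delta> (A n))"
proof (rule ennreal_le_epsilon)
  fix e :: real assume "0 < e" and finite: "(\<Sum>n. hausdorff_pre1 \<delta> (A n)) < top"
  define slack :: "nat \<Rightarrow> ennreal" where "slack n = ennreal e * ennreal ((1/2) ^ Suc n)" for n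
  have "hausdorff_pre1 \<delta> (A n) < hausdorff_pre1 \<delta> (A n) + slack n" for n
  proof -
    have "hausdorff_pre1 \<delta> (A n) < top" using finite by (auto dest!: ennreal_suminf_lessD)
    moreover have "0 < slack n" using \<open>0 < e\<close> by (simp add: slack_def ennreal_zero_less_mult_iff)
    ultimately show ?thesis by (simp add: ennreal_add_left_cancel_less top.not_eq_extremum)
  qed
  then have "\<forall>n. \<exists>U. (A n \<subseteq> (\<Union>i. U i) \<and> (\<forall>i. bounded (U i) \<and> diameter (U i) \<le> \<delta>)) \<and>
      (\<Sum>i. ennreal (diameter (U i))) < hausdorff_pre1 \<delta> (A n) + slack n"
    unfolding hausdorff_pre1_def INF_less_iff by blast
  then obtain B where cover: "\<And>n. A n \<subseteq> (\<Union>i. B n i)"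
    and small: "\<And>n i. bounded (B n i) \<and> diameter (B n i) \<le> \<delta>"
    and B_sum: "\<And>n. (\<Sum>i. ennreal (diameter (B n i))) \<le> hausdorff_pre1 \<delta> (A n) + slack n"
    by (metis less_imp_le)
  have "hausdorff_pre1 \<delta> (\<Union>n. A n) \<le> (\<Sum>n. \<Sum>i. ennreal (diameter (B n i)))"
    by (rule hausdorff_pre1_UN_le[OF cover small])
  also have "\<dots> \<le> (\<Sum>n. hausdorff_pre1 \<delta> (A n) + slack n)"
    by (intro suminf_le allI B_sum) auto
  also have "\<dots> = (\<Sum>n. hausdorff_pre1 \<delta> (A n)) + (\<Sum>n. slack n)"
    by (rule suminf_add[symmetric]) auto
  also have "(\<Sum>n. slack n) = ennreal e"
    unfolding slack_def ennreal_suminf_cmult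
    by (subst suminf_ennreal_eq[OF zero_le_power power_half_series]) auto
  finally show "hausdorff_pre1 \<delta> (\<Union>n. A n) \<le> (\<Sum>n. hausdorff_pre1 \<delta> (A n)) + ennreal e" .
qed

lemma H1_countable_subadditive: "H1 (\<Union>n. A n) \<le> (\<Sum>n. H1 (A n))"
  unfolding H1_def[of "\<Union>n. A n"]
proof (rule SUP_least)
  fix \<delta> :: real assume "\<delta> \<in> {0<..}"
  have "hausdorff_pre1 \<delta> (\<Union>n. A n) \<le> (\<Sum>n. hausdorff_pre1 \<delta> (A n))"
    by (rule hausdorff_pre1_countable_subadditive)
  also have "\<dots> \<le> (\<Sum>n. H1 (A n))"
    using \<open>\<delta> \<in> {0<..}\<close> by (intro suminf_le allI hausdorff_pre1_le_H1) auto
  finally show "hausdorff_pre1 \<delta> (\<Union>n. A n) \<le> (\<Sum>n. H1 (A n))" .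
qed

lemma H1_empty [simp]: "H1 {} = 0"
proof -
  have "hausdorff_pre1 \<delta> {} = 0" if "0 < \<delta>" for \<delta>
  proof -
    have "hausdorff_pre1 \<delta> {} \<le> (\<Sum>i. ennreal (diameter ({} :: point set)))"
      unfolding hausdorff_pre1_def using that by (intro INF_lower) auto
    then show ?thesis by simp
  qed
  then have "H1 {} = (SUP \<delta>\<in>{(0::real)<..}. 0)"
    unfolding H1_def by (intro SUP_cong) auto
  then show ?thesis by simp
qed

lemma H1_Un_le: "H1 (S \<union> T) \<le> H1 S + H1 T"
proof -
  define A where "A n = (if n = 0 then S else if n = 1 then T else {})" for n :: nat
  have "H1 (S \<union> T) = H1 (\<Union>n. A n)"
    by (rule arg_cong[of _ _ H1]) (auto simp: A_def split: if_splits)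
  also have "\<dots> \<le> (\<Sum>n. H1 (A n))" by (rule H1_countable_subadditive)
  also have "\<dots> = (\<Sum>n<2. H1 (A n))" by (rule suminf_finite) (auto simp: A_def)
  also have "\<dots> = H1 S + H1 T" by (simp add: A_def numeral_2_eq_2)
  finally show ?thesis .
qed

lemma H1_UN_countable_le:
  assumes "countable I"
  shows "H1 (\<Union>i\<in>I. A i) \<le> (\<integral>\<^sup>+i. H1 (A i) \<partial>count_space I)"
proof -
  define B where "B n = (if n \<in> to_nat_on I ` I then A (from_nat_into I n) else {})" for n
  have "(\<Union>i\<in>I. A i) = (\<Union>n. B n)"
    using assms by (force simp: B_def from_nat_into split: if_splits)
  then have "H1 (\<Union>i\<in>I. A i) \<le> (\<Sum>n. H1 (B n))"
    by (simp add: H1_countable_subadditive)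
  also have "\<dots> = (\<integral>\<^sup>+n. H1 (B n) \<partial>count_space UNIV)"
    by (simp add: nn_integral_count_space_nat)
  also have "\<dots> = (\<integral>\<^sup>+n \<in> to_nat_on I ` I. H1 (A (from_nat_into I n)) \<partial>count_space UNIV)"
    by (intro nn_integral_cong) (simp add: B_def)
  also have "\<dots> = (\<integral>\<^sup>+i \<in> I. H1 (A (from_nat_into I (to_nat_on I i))) \<partial>count_space UNIV)"
    using assms by (rule nn_integral_count_compose_inj[symmetric, OF inj_on_to_nat_on])
  also have "\<dots> = (\<integral>\<^sup>+i. H1 (A i) \<partial>count_space I)"
    using assms by (auto simp: nn_integral_count_space_indicator indicator_def intro!: nn_integral_cong)
  finally show ?thesis .
qed

lemma H1_cone_ball_le:
  assumes "cone_density E \<beta> x \<le> ennreal \<epsilon>" "0 < r" "0 \<le> \<epsilon>"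
  shows "H1 (cone_ball \<beta> x r \<inter> E) \<le> ennreal (\<epsilon> * r)"
proof -
  have "H1 (cone_ball \<beta> x r \<inter> E) / ennreal r \<le> cone_density E \<beta> x"
    unfolding cone_density_def using \<open>0 < r\<close> by (intro SUP_upper) auto
  then have "H1 (cone_ball \<beta> x r \<inter> E) / ennreal r \<le> ennreal \<epsilon>"
    using assms(1) by (rule order_trans)
  then have "H1 (cone_ball \<beta> x r \<inter> E) / ennreal r * ennreal r \<le> ennreal \<epsilon> * ennreal r"
    by (rule mult_right_mono) simp
  then have "H1 (cone_ball \<beta> x r \<inter> E) \<le> ennreal \<epsilon> * ennreal r"
    using \<open>0 < r\<close> by (simp add: ennreal_divide_times)
  then show ?thesis using assms by (simp add: ennreal_mult)
qed

lemma dist_point_le: "dist (p :: point) q \<le> \<bar>fst p - fst q\<bar> + \<bar>snd p - snd q\<bar>"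
  unfolding dist_prod_def dist_real_def using sqrt_sum_squares_le_sum_abs by simp

lemma mem_cone_ball_iff:
  "z \<in> cone_ball \<beta> x r \<longleftrightarrow> \<beta> * \<bar>fst z - fst x\<bar> \<le> \<bar>snd z - snd x\<bar> \<and> dist x z \<le> r"
proof -
  have "z \<in> (\<lambda>p. x + p) ` cone \<beta> \<longleftrightarrow> z - x \<in> cone \<beta>"
    by (auto simp: image_iff intro: bexI[of _ "z - x"])
  then show ?thesis by (simp add: cone_ball_def cone_def)
qed

lemma box_subset_cone_balls:
  assumes \<beta>: "0 < \<beta>" "\<beta> < 1/2"
    and steep: "2 * \<beta> * \<bar>fst y - fst x\<bar> \<le> \<bar>snd y - snd x\<bar>"
    and far: "h/2 < dist x y" and near: "dist x y \<le> h"
    and box: "\<bar>fst z - fst x\<bar> < h/8" "\<bar>snd z - snd x\<bar> < 10 * h"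
  shows "z \<in> cone_ball \<beta> x (11 * h) \<union> cone_ball \<beta> y (12 * h)"
proof -
  have "0 < h" using far near by linarith
  have "dist x z < 11 * h"
    using dist_point_le[of x z] box \<open>0 < h\<close> by (simp add: abs_minus_commute)
  show ?thesis
  proof (cases "\<beta> * \<bar>fst z - fst x\<bar> \<le> \<bar>snd z - snd x\<bar>")
    case True
    with \<open>dist x z < 11 * h\<close> show ?thesis by (simp add: mem_cone_ball_iff)
  next
    case False
    have rise: "\<beta> * h / 2 \<le> \<bar>snd y - snd x\<bar>"
    proof (rule ccontr)
      assume low: "\<not> ?thesis"
      then have "2 * \<beta> * \<bar>fst y - fst x\<bar> < 2 * \<beta> * (h/4)" using steep by linarith
      then have "\<bar>fst y - fst x\<bar> < h/4" using \<beta> by simp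
      moreover have "\<beta> * h < 1/2 * h" using mult_strict_right_mono[OF \<beta>(2) \<open>0 < h\<close>] .
      ultimately show False
        using low dist_point_le[of x y] far by (simp add: abs_minus_commute)
    qed
    have "\<beta> * \<bar>fst z - fst x\<bar> \<le> \<beta> * (h/8)" using box \<beta> by simp
    moreover have "\<beta> * \<bar>fst z - fst y\<bar> \<le> \<beta> * \<bar>fst y - fst x\<bar> + \<beta> * \<bar>fst z - fst x\<bar>"
      using \<beta> by (simp add: distrib_left[symmetric] mult_left_mono)
    ultimately have "\<beta> * \<bar>fst z - fst y\<bar> \<le> \<bar>snd z - snd y\<bar>"
      using False rise steep by linarith
    moreover have "dist y z \<le> 12 * h"
      using dist_triangle[of y z x] \<open>dist x z < 11 * h\<close> near by (simp add: dist_commute)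
    ultimately show ?thesis by (simp add: mem_cone_ball_iff)
  qed
qed

lemma H1_box_le:
  assumes "0 < \<beta>" "\<beta> < 1/2" "0 \<le> \<epsilon>"
    and "cone_density E \<beta> x \<le> ennreal \<epsilon>" "cone_density E \<beta> y \<le> ennreal \<epsilon>"
    and "2 * \<beta> * \<bar>fst y - fst x\<bar> \<le> \<bar>snd y - snd x\<bar>" "h/2 < dist x y" "dist x y \<le> h"
  shows "H1 {z \<in> E. \<bar>fst z - fst x\<bar> < h/8 \<and> \<bar>snd z - snd x\<bar> < 10 * h} \<le> ennreal (23 * \<epsilon> * h)"
proof -
  have "0 < h" using assms(7,8) by linarith
  have "{z \<in> E. \<bar>fst z - fst x\<bar> < h/8 \<and> \<bar>snd z - snd x\<bar> < 10 * h}
      \<subseteq> (cone_ball \<beta> x (11 * h) \<inter> E) \<union> (cone_ball \<beta> y (12 * h) \<inter> E)"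
    using box_subset_cone_balls[OF assms(1,2,6-8)] by blast
  then have "H1 {z \<in> E. \<bar>fst z - fst x\<bar> < h/8 \<and> \<bar>snd z - snd x\<bar> < 10 * h}
      \<le> H1 (cone_ball \<beta> x (11 * h) \<inter> E) + H1 (cone_ball \<beta> y (12 * h) \<inter> E)"
    by (meson H1_mono H1_Un_le order_trans)
  also have "\<dots> \<le> ennreal (\<epsilon> * (11 * h)) + ennreal (\<epsilon> * (12 * h))"
    using assms \<open>0 < h\<close> by (intro add_mono H1_cone_ball_le) auto
  also have "\<dots> = ennreal (23 * \<epsilon> * h)"
    using assms \<open>0 < h\<close> by (simp flip: ennreal_plus)
  finally show ?thesis .
qed

(* Balls of the metric pulled back by squash are ellipses 80 times taller than wide: enlarged
   fivefold they still fit into the box of H1_box_le, yet disjoint ones must be separated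
   horizontally unless their centres are cone partners. *)
definition squash :: "point \<Rightarrow> point" where
  "squash p = (fst p, snd p / 80)"

lemma squash_dist_less:
  assumes "dist (squash p) (squash q) < s"
  shows "\<bar>fst p - fst q\<bar> < s \<and> \<bar>snd p - snd q\<bar> < 80 * s"
proof -
  have "dist (fst p) (fst q) < s" "dist (snd p / 80) (snd q / 80) < s"
    using assms dist_fst_le[of "squash p" "squash q"] dist_snd_le[of "squash p" "squash q"]
    by (simp_all add: squash_def)
  then show ?thesis by (simp add: dist_real_def diff_divide_distrib[symmetric] abs_divide)
qed

lemma squash_dist_greater:
  assumes "s < dist (squash p) (squash q)"
  shows "s/2 \<le> \<bar>fst p - fst q\<bar> \<or> 40 * s < \<bar>snd p - snd q\<bar>"
proof -
  have "dist (squash p) (squash q) \<le> \<bar>fst p - fst q\<bar> + \<bar>snd p - snd q\<bar> / 80"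
    using dist_point_le[of "squash p" "squash q"]
    by (simp add: squash_def diff_divide_distrib[symmetric] abs_divide)
  then show ?thesis using assms by auto
qed

lemma disjnt_cball_imp_dist_gt:
  fixes a b :: "'a::real_normed_vector"
  assumes "disjnt (cball a r) (cball b s)" "0 \<le> r" "0 \<le> s"
  shows "r + s < dist a b"
proof (rule ccontr)
  assume "\<not> r + s < dist a b"
  then have close: "dist a b \<le> r + s" by simp
  define p where "p = a + (r / (r + s)) *\<^sub>R (b - a)"
  have "dist a p \<le> r \<and> dist p b \<le> s"
  proof (cases "r + s = 0")
    case True
    then show ?thesis using close assms(2,3) by (simp add: p_def)
  next
    case False
    then have "0 < r + s" using assms(2,3) by simp
    have "1 - r / (r + s) = s / (r + s)"
      using \<open>0 < r + s\<close> by (simp add: field_simps)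
    moreover have "b - p = (1 - r / (r + s)) *\<^sub>R (b - a)"
      by (simp add: p_def algebra_simps)
    ultimately have "b - p = (s / (r + s)) *\<^sub>R (b - a)" by simp
    then have "dist a p = r / (r + s) * dist a b" "dist p b = s / (r + s) * dist a b"
      using assms(2,3) by (simp_all add: p_def dist_norm norm_minus_commute)
    moreover have "r * dist a b \<le> r * (r + s)" "s * dist a b \<le> s * (r + s)"
      using close assms(2,3) by (simp_all add: mult_left_mono)
    ultimately show ?thesis using \<open>0 < r + s\<close> by (simp add: divide_le_eq)
  qed
  then show False using assms(1) by (auto simp: disjnt_def dist_commute)
qed

lemma squash_cballs_disjnt_imp_separated:
  assumes "disjnt (cball (squash p) (hp/40)) (cball (squash q) (hq/40))" "0 \<le> hp" "0 \<le> hq"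
    and "\<beta> \<le> 1/2"
    and scale: "2 * \<beta> * \<bar>fst q - fst p\<bar> \<le> \<bar>snd q - snd p\<bar> \<Longrightarrow> dist p q \<le> hp"
  shows "(hp + hq)/80 \<le> \<bar>fst p - fst q\<bar>"
proof (rule ccontr)
  assume close: "\<not> ?thesis"
  have "hp/40 + hq/40 < dist (squash p) (squash q)"
    using assms(1-3) by (intro disjnt_cball_imp_dist_gt) auto
  then have rise: "hp + hq < \<bar>snd p - snd q\<bar>"
    using squash_dist_greater close by fastforce
  have "2 * \<beta> * \<bar>fst q - fst p\<bar> \<le> 1 * \<bar>fst q - fst p\<bar>"
    using \<open>\<beta> \<le> 1/2\<close> by (intro mult_right_mono) auto
  then have "dist p q \<le> hp"
    using close rise assms(2,3) by (intro scale) (simp add: abs_minus_commute)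
  then show False
    using rise dist_snd_le[of p q] \<open>0 \<le> hq\<close> by (simp add: dist_real_def)
qed

lemma interval_packing:
  fixes t w :: "'a \<Rightarrow> real"
  assumes "countable C"
    and inside: "\<And>c. c \<in> C \<Longrightarrow> 0 \<le> w c \<and> a \<le> t c - w c / 2 \<and> t c + w c / 2 \<le> b"
    and separated: "\<And>c d. c \<in> C \<Longrightarrow> d \<in> C \<Longrightarrow> c \<noteq> d \<Longrightarrow> (w c + w d) / 2 \<le> \<bar>t c - t d\<bar>"
  shows "(\<integral>\<^sup>+c. ennreal (w c) \<partial>count_space C) \<le> ennreal (b - a)"
proof -
  define J where "J c = {t c - w c / 2 <..< t c + w c / 2}" for c
  have "disjoint_family_on J C"
    unfolding disjoint_family_on_def J_def
    using separated by (fastforce simp: abs_if split: if_splits)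
  have "(\<integral>\<^sup>+c. ennreal (w c) \<partial>count_space C) = (\<integral>\<^sup>+c. emeasure lborel (J c) \<partial>count_space C)"
    using inside by (intro nn_integral_cong) (simp add: J_def)
  also have "\<dots> = emeasure lborel (\<Union>c\<in>C. J c)"
    by (rule emeasure_UN_countable[symmetric, OF _ \<open>countable C\<close> \<open>disjoint_family_on J C\<close>])
      (simp add: J_def)
  also have "\<dots> \<le> emeasure lborel {a..b}"
    by (intro emeasure_mono) (auto simp: J_def dest!: inside)
  also have "\<dots> \<le> ennreal (b - a)"
    by (simp add: emeasure_lborel_Icc_eq)
  finally show ?thesis .
qed

lemma lipschitz_graph_if_slopes_bounded:
  assumes "0 \<le> L" and slope: "\<And>p q. p \<in> S \<Longrightarrow> q \<in> S \<Longrightarrow> \<bar>snd p - snd q\<bar> \<le> L * \<bar>fst p - fst q\<bar>"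
  shows "lipschitz_graph L S"
proof -
  define f where "f t = snd (SOME p. p \<in> S \<and> fst p = t)" for t
  have f: "f (fst p) = snd p" if "p \<in> S" for p
  proof -
    define q where "q = (SOME q. q \<in> S \<and> fst q = fst p)"
    have "\<exists>q. q \<in> S \<and> fst q = fst p" using that by blast
    then have "q \<in> S \<and> fst q = fst p"
      unfolding q_def by (rule someI_ex)
    then have "\<bar>snd p - snd q\<bar> \<le> 0" using slope[OF that, of q] by simp
    then show ?thesis by (simp add: f_def flip: q_def)
  qed
  have "L-lipschitz_on (fst ` S) f"
  proof (rule lipschitz_onI)
    fix s t assume "s \<in> fst ` S" "t \<in> fst ` S"
    then obtain p q where "p \<in> S" "q \<in> S" "s = fst p" "t = fst q" by blast
    then show "dist (f s) (f t) \<le> L * dist s t" using slope f by (simp add: dist_real_def)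
  qed (rule \<open>0 \<le> L\<close>)
  moreover have "S = {(t, f t) | t. t \<in> fst ` S}"
    using f by force
  ultimately show ?thesis unfolding lipschitz_graph_def by blast
qed

lemma Sup_dist_bounds:
  fixes x :: "'a::real_normed_vector"
  assumes "P \<subseteq> cball 0 1" "norm x \<le> 1" "P \<noteq> {}" "x \<notin> P"
  shows "0 < Sup (dist x ` P)" "Sup (dist x ` P) \<le> 2"
    and "\<And>y. y \<in> P \<Longrightarrow> dist x y \<le> Sup (dist x ` P)"
    and "\<exists>y\<in>P. Sup (dist x ` P) / 2 < dist x y"
proof -
  have le_2: "dist x y \<le> 2" if "y \<in> P" for y
    using assms(1,2) that norm_triangle_ineq4[of x y] by (auto simp: dist_norm)
  then have "bdd_above (dist x ` P)" by (rule bdd_aboveI2)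
  then show upper: "dist x y \<le> Sup (dist x ` P)" if "y \<in> P" for y
    using that by (auto intro: cSup_upper)
  obtain y where "y \<in> P" using assms(3) by blast
  then have "0 < dist x y" using assms(4) by auto
  then show pos: "0 < Sup (dist x ` P)" using upper[OF \<open>y \<in> P\<close>] by linarith
  show "Sup (dist x ` P) \<le> 2" using assms(3) le_2 by (auto intro: cSup_least)
  have "Sup (dist x ` P) / 2 < Sup (dist x ` P)" using pos by simp
  moreover have "dist x ` P \<noteq> {}" using assms(3) by simp
  ultimately show "\<exists>y\<in>P. Sup (dist x ` P) / 2 < dist x y"
    using less_cSup_iff[OF _ \<open>bdd_above (dist x ` P)\<close>] by blast
qed

definition cone_partners :: "real \<Rightarrow> point set \<Rightarrow> point \<Rightarrow> point set" where
  "cone_partners \<beta> G x = {y \<in> G. y \<noteq> x \<and> 2 * \<beta> * \<bar>fst y - fst x\<bar> \<le> \<bar>snd y - snd x\<bar>}"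

definition partner_scale :: "real \<Rightarrow> point set \<Rightarrow> point \<Rightarrow> real" where
  "partner_scale \<beta> G x = Sup (dist x ` cone_partners \<beta> G x)"

lemma partner_scale_bounds:
  assumes "G \<subseteq> cball 0 1" "x \<in> G" "cone_partners \<beta> G x \<noteq> {}"
  shows "0 < partner_scale \<beta> G x" "partner_scale \<beta> G x \<le> 2"
    and "\<And>y. y \<in> cone_partners \<beta> G x \<Longrightarrow> dist x y \<le> partner_scale \<beta> G x"
    and "\<exists>y\<in>cone_partners \<beta> G x. partner_scale \<beta> G x / 2 < dist x y"
proof -
  have "cone_partners \<beta> G x \<subseteq> cball 0 1" "norm x \<le> 1" "x \<notin> cone_partners \<beta> G x"
    using assms(1,2) by (auto simp: cone_partners_def)
  from Sup_dist_bounds[OF this(1,2) assms(3) this(3)]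
  show "0 < partner_scale \<beta> G x" "partner_scale \<beta> G x \<le> 2"
    and "\<And>y. y \<in> cone_partners \<beta> G x \<Longrightarrow> dist x y \<le> partner_scale \<beta> G x"
    and "\<exists>y\<in>cone_partners \<beta> G x. partner_scale \<beta> G x / 2 < dist x y"
    unfolding partner_scale_def by blast+
qed

lemma H1_partner_box_le:
  assumes "G \<subseteq> cball 0 1" and density: "\<And>x. x \<in> G \<Longrightarrow> cone_density E \<beta> x \<le> ennreal \<epsilon>"
    and "0 \<le> \<epsilon>" "0 < \<beta>" "\<beta> < 1/2" "c \<in> G" "cone_partners \<beta> G c \<noteq> {}"
  defines "h \<equiv> partner_scale \<beta> G c"
  shows "H1 {z \<in> E. \<bar>fst z - fst c\<bar> < h / 8 \<and> \<bar>snd z - snd c\<bar> < 10 * h}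
    \<le> ennreal (920 * \<epsilon>) * ennreal (h / 40)"
proof -
  note h = partner_scale_bounds[OF assms(1,6,7), folded h_def]
  obtain y where "y \<in> cone_partners \<beta> G c" and far: "h / 2 < dist c y" using h(4) by blast
  then have "y \<in> G" and steep: "2 * \<beta> * \<bar>fst y - fst c\<bar> \<le> \<bar>snd y - snd c\<bar>"
    by (auto simp: cone_partners_def)
  have "H1 {z \<in> E. \<bar>fst z - fst c\<bar> < h / 8 \<and> \<bar>snd z - snd c\<bar> < 10 * h} \<le> ennreal (23 * \<epsilon> * h)"
    using H1_box_le[OF assms(4,5,3) density[OF \<open>c \<in> G\<close>] density[OF \<open>y \<in> G\<close>] steep far
        h(3)[OF \<open>y \<in> cone_partners \<beta> G c\<close>]] .
  also have "\<dots> = ennreal (920 * \<epsilon>) * ennreal (h / 40)"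
    using \<open>0 \<le> \<epsilon>\<close> h(1) by (simp flip: ennreal_mult)
  finally show ?thesis .
qed

lemma partner_centres_separated:
  assumes "G \<subseteq> cball 0 1" "\<beta> < 1/2" "c \<in> G" "d \<in> G" "c \<noteq> d"
    and "cone_partners \<beta> G c \<noteq> {}" "cone_partners \<beta> G d \<noteq> {}"
    and "disjnt (cball (squash c) (partner_scale \<beta> G c / 40))
                (cball (squash d) (partner_scale \<beta> G d / 40))"
  shows "(partner_scale \<beta> G c / 40 + partner_scale \<beta> G d / 40) / 2 \<le> \<bar>fst c - fst d\<bar>"
proof -
  note hc = partner_scale_bounds[OF assms(1,3,6)] and hd = partner_scale_bounds[OF assms(1,4,7)]
  have "dist c d \<le> partner_scale \<beta> G c" if "2 * \<beta> * \<bar>fst d - fst c\<bar> \<le> \<bar>snd d - snd c\<bar>"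
    using hc(3) that assms(4,5) by (auto simp: cone_partners_def)
  then have "(partner_scale \<beta> G c + partner_scale \<beta> G d) / 80 \<le> \<bar>fst c - fst d\<bar>"
    using assms(2,8) hc(1) hd(1) by (intro squash_cballs_disjnt_imp_separated) auto
  then show ?thesis by simp
qed

lemma partner_scales_packing:
  assumes "G \<subseteq> cball 0 1" "\<beta> < 1/2" "countable C" "C \<subseteq> {x \<in> G. cone_partners \<beta> G x \<noteq> {}}"
    and "pairwise (\<lambda>c d. disjnt (cball (squash c) (partner_scale \<beta> G c / 40))
                                (cball (squash d) (partner_scale \<beta> G d / 40))) C"
  shows "(\<integral>\<^sup>+c. ennreal (partner_scale \<beta> G c / 40) \<partial>count_space C) \<le> 4"
proof -
  have "(\<integral>\<^sup>+c. ennreal (partner_scale \<beta> G c / 40) \<partial>count_space C) \<le> ennreal (2 - (-2))"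
  proof (rule interval_packing[OF \<open>countable C\<close>])
    fix c assume "c \<in> C"
    then have c: "c \<in> G" "cone_partners \<beta> G c \<noteq> {}" using assms(4) by auto
    then have "norm c \<le> 1" using assms(1) by (meson mem_cball_0 subsetD)
    then have "\<bar>fst c\<bar> \<le> 1" using norm_fst_le[of "fst c" "snd c"] by simp
    then show "0 \<le> partner_scale \<beta> G c / 40 \<and> - 2 \<le> fst c - partner_scale \<beta> G c / 40 / 2
        \<and> fst c + partner_scale \<beta> G c / 40 / 2 \<le> 2"
      using partner_scale_bounds(1,2)[OF assms(1) c] by auto
  next
    fix c d assume "c \<in> C" "d \<in> C" "c \<noteq> d"
    then show "(partner_scale \<beta> G c / 40 + partner_scale \<beta> G d / 40) / 2 \<le> \<bar>fst c - fst d\<bar>"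
      using assms(4,5) unfolding pairwise_def
      by (intro partner_centres_separated[OF assms(1,2)]) auto
  qed
  then show ?thesis by simp
qed

lemma squash_Vitali_cover:
  assumes "\<And>x. x \<in> U \<Longrightarrow> 0 < h x \<and> h x \<le> 40"
  obtains C where "countable C" "C \<subseteq> U"
    and "pairwise (\<lambda>i j. disjnt (cball (squash i) (h i / 40)) (cball (squash j) (h j / 40))) C"
    and "U \<subseteq> (\<Union>c\<in>C. {z. \<bar>fst z - fst c\<bar> < h c / 8 \<and> \<bar>snd z - snd c\<bar> < 10 * h c})"
proof -
  have "0 < h x / 40 \<and> h x / 40 \<le> 1" if "x \<in> U" for x
    using assms[OF that] by simp
  then obtain C where "countable C" "C \<subseteq> U"
    and disjoint: "pairwise (\<lambda>i j. disjnt (cball (squash i) (h i / 40)) (cball (squash j) (h j / 40))) C"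
    and cover: "\<And>i. i \<in> U \<Longrightarrow> \<exists>j. j \<in> C \<and>
        \<not> disjnt (cball (squash i) (h i / 40)) (cball (squash j) (h j / 40)) \<and>
        cball (squash i) (h i / 40) \<subseteq> ball (squash j) (5 * (h j / 40))"
    by (rule Vitali_covering_lemma_cballs_balls[of U "\<lambda>x. h x / 40" 1 squash]) blast+
  have "z \<in> (\<Union>c\<in>C. {z. \<bar>fst z - fst c\<bar> < h c / 8 \<and> \<bar>snd z - snd c\<bar> < 10 * h c})" if z: "z \<in> U" for z
  proof -
    obtain c where "c \<in> C" and "cball (squash z) (h z / 40) \<subseteq> ball (squash c) (h c / 8)"
      using cover[OF z] by fastforce
    moreover have "squash z \<in> cball (squash z) (h z / 40)" using assms[OF z] by simp
    ultimately have "squash z \<in> ball (squash c) (h c / 8)" by blast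
    then have "dist (squash z) (squash c) < h c / 8" by (simp add: dist_commute)
    with \<open>c \<in> C\<close> show ?thesis using squash_dist_less[of z c "h c / 8"] by auto
  qed
  with that \<open>countable C\<close> \<open>C \<subseteq> U\<close> disjoint show ?thesis by blast
qed

lemma H1_points_with_partners_le:
  assumes "G \<subseteq> E" "G \<subseteq> cball 0 1" and density: "\<And>x. x \<in> G \<Longrightarrow> cone_density E \<beta> x \<le> ennreal \<epsilon>"
    and "0 \<le> \<epsilon>" "0 < \<beta>" "\<beta> < 1/2"
  shows "H1 {x \<in> G. cone_partners \<beta> G x \<noteq> {}} \<le> ennreal (3680 * \<epsilon>)"
proof -
  define U where "U = {x \<in> G. cone_partners \<beta> G x \<noteq> {}}"
  define h where "h = partner_scale \<beta> G"
  define B where "B c = {z \<in> E. \<bar>fst z - fst c\<bar> < h c / 8 \<and> \<bar>snd z - snd c\<bar> < 10 * h c}" for c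
  have "0 < h x \<and> h x \<le> 40" if "x \<in> U" for x
    using partner_scale_bounds(1,2)[OF assms(2), of x \<beta>] that by (simp add: h_def U_def)
  then obtain C where "countable C" "C \<subseteq> U"
    and disjoint: "pairwise (\<lambda>i j. disjnt (cball (squash i) (h i / 40)) (cball (squash j) (h j / 40))) C"
    and cover: "U \<subseteq> (\<Union>c\<in>C. {z. \<bar>fst z - fst c\<bar> < h c / 8 \<and> \<bar>snd z - snd c\<bar> < 10 * h c})"
    by (rule squash_Vitali_cover)
  have "U \<subseteq> (\<Union>c\<in>C. B c)"
    using cover assms(1) by (auto simp: B_def U_def)
  then have "H1 U \<le> (\<integral>\<^sup>+c. H1 (B c) \<partial>count_space C)"
    using H1_UN_countable_le[OF \<open>countable C\<close>] H1_mono order_trans by blast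
  also have "\<dots> \<le> (\<integral>\<^sup>+c. ennreal (920 * \<epsilon>) * ennreal (h c / 40) \<partial>count_space C)"
    using \<open>C \<subseteq> U\<close> unfolding B_def h_def U_def
    by (intro nn_integral_mono H1_partner_box_le[OF assms(2) density assms(4-6)]) auto
  also have "\<dots> = ennreal (920 * \<epsilon>) * (\<integral>\<^sup>+c. ennreal (h c / 40) \<partial>count_space C)"
    by (rule nn_integral_cmult) simp
  also have "\<dots> \<le> ennreal (920 * \<epsilon>) * ennreal 4"
    using partner_scales_packing[OF assms(2,6) \<open>countable C\<close>] \<open>C \<subseteq> U\<close> disjoint
    unfolding U_def h_def by (intro mult_left_mono) auto
  also have "\<dots> = ennreal (3680 * \<epsilon>)"
    using \<open>0 \<le> \<epsilon>\<close> by (subst ennreal_mult[symmetric]) auto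
  finally show ?thesis by (simp only: U_def)
qed

lemma lipschitz_graph_partnerless:
  assumes "0 \<le> \<beta>"
  shows "lipschitz_graph (2 * \<beta>) {x \<in> G. cone_partners \<beta> G x = {}}"
proof (rule lipschitz_graph_if_slopes_bounded)
  fix p q assume pq: "p \<in> {x \<in> G. cone_partners \<beta> G x = {}}" "q \<in> {x \<in> G. cone_partners \<beta> G x = {}}"
  show "\<bar>snd p - snd q\<bar> \<le> 2 * \<beta> * \<bar>fst p - fst q\<bar>"
  proof (cases "p = q")
    case False
    then have "\<not> 2 * \<beta> * \<bar>fst q - fst p\<bar> \<le> \<bar>snd q - snd p\<bar>"
      using pq unfolding cone_partners_def by blast
    then show ?thesis by (simp add: abs_minus_commute)
  qed simp
qed (use assms in simp)

theorem lemma4p3: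
  "\<exists>A::real. A > 0 \<and>
     (\<forall>(E::point set) (\<epsilon>::real) (\<beta>::real).
        E \<subseteq> cball 0 1 \<and> 0 < \<epsilon> \<and> \<epsilon> < 1 \<and> 0 < \<beta> \<and> \<beta> < 1/2 \<longrightarrow>
        (\<exists>\<Gamma>. lipschitz_graph (2 * \<beta>) \<Gamma> \<and>
           H1 ({x \<in> E. cone_density E \<beta> x \<le> ennreal \<epsilon>} - \<Gamma>) \<le> ennreal (A * \<epsilon> / \<beta>)))"
proof (intro exI[of _ 3680] conjI allI impI)
  fix E :: "point set" and \<epsilon> \<beta> :: real
  assume hyps: "E \<subseteq> cball 0 1 \<and> 0 < \<epsilon> \<and> \<epsilon> < 1 \<and> 0 < \<beta> \<and> \<beta> < 1/2"
  define G where "G = {x \<in> E. cone_density E \<beta> x \<le> ennreal \<epsilon>}"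
  define \<Gamma> where "\<Gamma> = {x \<in> G. cone_partners \<beta> G x = {}}"
  have "G - \<Gamma> = {x \<in> G. cone_partners \<beta> G x \<noteq> {}}"
    by (auto simp: \<Gamma>_def)
  moreover have "G \<subseteq> E" "G \<subseteq> cball 0 1" "\<And>x. x \<in> G \<Longrightarrow> cone_density E \<beta> x \<le> ennreal \<epsilon>"
    using hyps by (auto simp: G_def)
  ultimately have "H1 (G - \<Gamma>) \<le> ennreal (3680 * \<epsilon>)"
    using hyps by (simp add: H1_points_with_partners_le)
  moreover have "lipschitz_graph (2 * \<beta>) \<Gamma>"
    using hyps by (simp add: \<Gamma>_def lipschitz_graph_partnerless)
  moreover have "ennreal (3680 * \<epsilon>) \<le> ennreal (3680 * \<epsilon> / \<beta>)"
    using hyps by (intro ennreal_leI) (simp add: le_divide_eq)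
  ultimately show "\<exists>\<Gamma>. lipschitz_graph (2 * \<beta>) \<Gamma> \<and>
      H1 ({x \<in> E. cone_density E \<beta> x \<le> ennreal \<epsilon>} - \<Gamma>) \<le> ennreal (3680 * \<epsilon> / \<beta>)"
    unfolding G_def by (meson order_trans)
qed simp

end
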